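(* Let $\mathbf X$ be a design, $\lambda>0$, and $\boldsymbol\beta\in\mathbb R^p$ with fixed support $\mathcal A$, $|\mathcal A|=k$. Let $\mathcal Z_{\mathcal A}^{\pm}\subset\mathcal Z_{\mathcal A}$ be a set of $2^{k-1}$ sign vectors containing exactly one vector from each pair $\{\tilde{\boldsymbol z},-\tilde{\boldsymbol z}\}$ in $\mathcal Z_{\mathcal A}$. Then \[ \phi^{\pm}_\lambda(\mathbf X\mid\boldsymbol\beta)=2^{-(k-1)}\sum_{\tilde{\boldsymbol z}\in\mathcal Z_{\mathcal A}^{\pm}}\phi_\lambda(\mathbf X\mid\tilde{\mathbf Z}\boldsymbol\beta). \]
   Context: A design is an $n\times p$ matrix $\mathbf X$ with entries in $\{-1,+1\}$. Let $\mathbf P_1=n^{-1}\mathbf 1\mathbf 1^T$, $\mathbf V$ the diagonal matrix of the diagonal entries of $n^{-1}\mathbf X^T(\mathbf I-\mathbf P_1)\mathbf X$, $\mathbf F=(\mathbf I-\mathbf P_1)\mathbf X\mathbf V^{-1/2}$, $\mathbf C=n^{-1}\mathbf F^T\mathbf F$. For $\boldsymbol\beta$: support $\mathcal A=\{j:\beta_j\ne0\}$, complement $\mathcal I$, $\boldsymbol z=\mathrm{sign}(\boldsymbol\beta)$, $\mathbf Z_{\mathcal A}=\mathrm{Diag}(\boldsymbol z_{\mathcal A})$; subscripts denote subvectors/submatrices ($\mathbf F_{\mathcal T}$ columns, $\mathbf M_{\mathcal U\mathcal T}$ rows $\mathcal U$ and columns $\mathcal T$, $\mathbf M_{\mathcal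 T}=\mathbf M_{\mathcal T\mathcal T}$). Assume $\mathbf C_{\mathcal A}$ invertible and $\mathbf V_{\mathcal A}$ has positive diagonal. With $\mathbf P_{\mathcal A}=\mathbf F_{\mathcal A}(\mathbf F_{\mathcal A}^T\mathbf F_{\mathcal A})^{-1}\mathbf F_{\mathcal A}^T$, $\lambda_n=\lambda\sqrt n$, $\boldsymbol e\sim N(\mathbf 0,\mathbf I_n)$, $\boldsymbol u=-n^{-1/2}\mathbf Z_{\mathcal A}\mathbf C_{\mathcal A}^{-1}\mathbf F_{\mathcal A}^T\boldsymbol e+\lambda_n\mathbf Z_{\mathcal A}\mathbf C_{\mathcal A}^{-1}\boldsymbol z_{\mathcal A}$, $\boldsymbol v=n^{-1/2}\mathbf F_{\mathcal I}^T(\mathbf I-\mathbf P_{\mathcal A})\boldsymbol e+\lambda_n\mathbf C_{\mathcal I\mathcal A}\mathbf C_{\mathcal A}^{-1}\boldsymbol z_{\mathcal A}$, define $S_\lambda=\{\boldsymbol u<\sqrt n\mathbf Z_{\mathcal A}\mathbf V_{\mathcal A}^{1/2}\boldsymbol\beta_{\mathcal A}\}$, $I_\lambda=\{|\boldsymbol v|\le\lambda_n\mathbf 1\}$ (componentwise) and $\phi_\lambda(\mathbf X\mid\boldsymbol\beta)=P(S_\lambda\cap I_\lambda)$. Let $\mathcal Z_{\mathcal A}$ be the set of the $2^k$ vectors $\tilde{\boldsymbol z}\in\{-1,0,1\}^p$ with $\tilde z_j=0$ for $j\in\mathcal I$ and $\tilde z_j\in\{-1,1\}$ for $j\in\mathcal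 A$; for such $\tilde{\boldsymbol z}$ let $\tilde{\mathbf Z}$ be the $p\times p$ diagonal matrix with entries $\tilde z_j$ for $j\in\mathcal A$ and $1$ for $j\in\mathcal I$. The sign-averaged criterion is $\phi^{\pm}_\lambda(\mathbf X\mid\boldsymbol\beta)=2^{-k}\sum_{\tilde{\boldsymbol z}\in\mathcal Z_{\mathcal A}}\phi_\lambda(\mathbf X\mid\tilde{\mathbf Z}\boldsymbol\beta)$. *)

theory Defs
  imports "HOL-Probability.Probability"
begin

text \<open>Matrices and vectors are represented as functions on natural-number indices:
  an n x p design is X :: nat => nat => real with rows i < n and columns j < p;
  vectors in R^p are nat => real, entries j < p being relevant.\<close>

definition design :: "nat \<Rightarrow> nat \<Rightarrow> (nat \<Rightarrow> nat \<Rightarrow> real) \<Rightarrow> bool" where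
  "design n p X \<longleftrightarrow> (\<forall>i<n. \<forall>j<p. X i j \<in> {-1, 1})"

text \<open>Column means, i.e. the entries of P_1 X.\<close>
definition colmean :: "nat \<Rightarrow> (nat \<Rightarrow> nat \<Rightarrow> real) \<Rightarrow> nat \<Rightarrow> real" where
  "colmean n X j = (\<Sum>i<n. X i j) / real n"

text \<open>Diagonal entries of V = diag(n^{-1} X^T (I - P_1) X).\<close>
definition Vdiag :: "nat \<Rightarrow> (nat \<Rightarrow> nat \<Rightarrow> real) \<Rightarrow> nat \<Rightarrow> real" where
  "Vdiag n X j = (\<Sum>i<n. X i j * (X i j - colmean n X j)) / real n"

text \<open>F = (I - P_1) X V^{-1/2}.\<close>
definition Fmat :: "nat \<Rightarrow> (nat \<Rightarrow> nat \<Rightarrow> real) \<Rightarrow> nat \<Rightarrow> nat \<Rightarrow> real" where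
  "Fmat n X i j = (X i j - colmean n X j) / sqrt (Vdiag n X j)"

definition Cmat :: "nat \<Rightarrow> (nat \<Rightarrow> nat \<Rightarrow> real) \<Rightarrow> nat \<Rightarrow> nat \<Rightarrow> real" where
  "Cmat n X j l = (\<Sum>i<n. Fmat n X i j * Fmat n X i l) / real n"

text \<open>Invertibility of the principal submatrix M_T (T a finite index set) and its inverse
  (as a function on T x T, zero outside).\<close>
definition is_inverse_on :: "nat set \<Rightarrow> (nat \<Rightarrow> nat \<Rightarrow> real) \<Rightarrow> (nat \<Rightarrow> nat \<Rightarrow> real) \<Rightarrow> bool" where
  "is_inverse_on T M G \<longleftrightarrow>
     (\<forall>j\<in>T. \<forall>l\<in>T. (\<Sum>m\<in>T. G j m * M m l) = (if j = l then 1 else 0)) \<and>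
     (\<forall>j\<in>T. \<forall>l\<in>T. (\<Sum>m\<in>T. M j m * G m l) = (if j = l then 1 else 0)) \<and>
     (\<forall>j l. j \<notin> T \<or> l \<notin> T \<longrightarrow> G j l = 0)"

definition invertible_on :: "nat set \<Rightarrow> (nat \<Rightarrow> nat \<Rightarrow> real) \<Rightarrow> bool" where
  "invertible_on T M \<longleftrightarrow> (\<exists>G. is_inverse_on T M G)"

definition inv_on :: "nat set \<Rightarrow> (nat \<Rightarrow> nat \<Rightarrow> real) \<Rightarrow> nat \<Rightarrow> nat \<Rightarrow> real" where
  "inv_on T M = (THE G. is_inverse_on T M G)"

definition supp :: "nat \<Rightarrow> (nat \<Rightarrow> real) \<Rightarrow> nat set" where
  "supp p \<beta> = {j. j < p \<and> \<beta> j \<noteq> 0}"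

definition nsupp :: "nat \<Rightarrow> (nat \<Rightarrow> real) \<Rightarrow> nat set" where
  "nsupp p \<beta> = {j. j < p \<and> \<beta> j = 0}"

definition gauss :: "nat \<Rightarrow> (nat \<Rightarrow> real) measure" where
  "gauss n = PiM {..<n} (\<lambda>_. density lborel std_normal_density)"

text \<open>(I - P_A) e, where P_A = F_A (F_A^T F_A)^{-1} F_A^T = n^{-1} F_A C_A^{-1} F_A^T.\<close>
definition resid :: "nat \<Rightarrow> (nat \<Rightarrow> nat \<Rightarrow> real) \<Rightarrow> nat set \<Rightarrow> (nat \<Rightarrow> real) \<Rightarrow> nat \<Rightarrow> real" where
  "resid n X A e i = e i - (\<Sum>a\<in>A. \<Sum>b\<in>A. Fmat n X i a * inv_on A (Cmat n X) a b *
        (\<Sum>i'<n. Fmat n X i' b * e i')) / real n"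

definition uvec :: "nat \<Rightarrow> nat \<Rightarrow> (nat \<Rightarrow> nat \<Rightarrow> real) \<Rightarrow> real \<Rightarrow> (nat \<Rightarrow> real) \<Rightarrow> (nat \<Rightarrow> real) \<Rightarrow> nat \<Rightarrow> real" where
  "uvec n p X lam \<beta> e j =
     (let A = supp p \<beta>; z = (\<lambda>m. sgn (\<beta> m)); Ci = inv_on A (Cmat n X) in
      - (1 / sqrt (real n)) * z j * (\<Sum>m\<in>A. Ci j m * (\<Sum>i<n. Fmat n X i m * e i))
      + lam * sqrt (real n) * z j * (\<Sum>m\<in>A. Ci j m * z m))"

definition vvec :: "nat \<Rightarrow> nat \<Rightarrow> (nat \<Rightarrow> nat \<Rightarrow> real) \<Rightarrow> real \<Rightarrow> (nat \<Rightarrow> real) \<Rightarrow> (nat \<Rightarrow> real) \<Rightarrow> nat \<Rightarrow> real" where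
  "vvec n p X lam \<beta> e j =
     (let A = supp p \<beta>; z = (\<lambda>m. sgn (\<beta> m)); Ci = inv_on A (Cmat n X) in
      (1 / sqrt (real n)) * (\<Sum>i<n. Fmat n X i j * resid n X A e i)
      + lam * sqrt (real n) * (\<Sum>m\<in>A. Cmat n X j m * (\<Sum>l\<in>A. Ci m l * z l)))"

definition phi :: "nat \<Rightarrow> nat \<Rightarrow> (nat \<Rightarrow> nat \<Rightarrow> real) \<Rightarrow> real \<Rightarrow> (nat \<Rightarrow> real) \<Rightarrow> real" where
  "phi n p X lam \<beta> = measure (gauss n)
     {e \<in> space (gauss n).
        (\<forall>j\<in>supp p \<beta>. uvec n p X lam \<beta> e j
              < sqrt (real n) * sgn (\<beta> j) * sqrt (Vdiag n X j) * \<beta> j) \<and>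
        (\<forall>j\<in>nsupp p \<beta>. \<bar>vvec n p X lam \<beta> e j\<bar> \<le> lam * sqrt (real n))}"

definition signvecs :: "nat \<Rightarrow> (nat \<Rightarrow> real) \<Rightarrow> (nat \<Rightarrow> real) set" where
  "signvecs p \<beta> = {z. \<forall>j. (j \<in> supp p \<beta> \<longrightarrow> z j \<in> {-1, 1}) \<and> (j \<notin> supp p \<beta> \<longrightarrow> z j = 0)}"

text \<open>tilde Z beta: diagonal matrix with z_j on A and 1 on I, applied to beta.\<close>
definition signflip :: "nat \<Rightarrow> (nat \<Rightarrow> real) \<Rightarrow> (nat \<Rightarrow> real) \<Rightarrow> nat \<Rightarrow> real" where
  "signflip p \<beta> z j = (if j \<in> supp p \<beta> then z j else 1) * \<beta> j"

definition phi_pm :: "nat \<Rightarrow> nat \<Rightarrow> (nat \<Rightarrow> nat \<Rightarrow> real) \<Rightarrow> real \<Rightarrow> (nat \<Rightarrow> real) \<Rightarrow> real" where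
  "phi_pm n p X lam \<beta> = (1 / 2 ^ card (supp p \<beta>)) *
      (\<Sum>z\<in>signvecs p \<beta>. phi n p X lam (signflip p \<beta> z))"

end

theory Submission imports Defs begin

text \<open>The noise e ~ N(0, I) is symmetric. Replacing \<beta> by -\<beta> flips the sign vector z, and
  then u(-\<beta>, e) = u(\<beta>, -e) and v(-\<beta>, e) = -v(\<beta>, -e), while the thresholds are even in \<beta>.
  So the sign-recovery event for -\<beta> is the reflection of the one for \<beta>, whence
  \<phi>(-\<beta>) = \<phi>(\<beta>). The sign vectors z and -z therefore contribute equally to the sign-averaged
  criterion, and the sum over Z_A is twice the sum over any set containing one vector of each antipodal pair.\<close>

lemma distr_uminus_std_normal:
  "distr (density lborel std_normal_density) lborel uminus = density lborel std_normal_density"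
proof -
  have "distr lborel lborel (uminus :: real \<Rightarrow> real) = lborel"
    using lborel_distr_uminus by (metis distr_cong sets_lborel)
  moreover have "(\<lambda>x. ennreal (std_normal_density x)) \<circ> uminus = (\<lambda>x. ennreal (std_normal_density x))"
    by (auto simp: fun_eq_iff normal_density_def)
  moreover have "distr (density (distr lborel lborel uminus) std_normal_density) lborel uminus
      = density lborel ((\<lambda>x. ennreal (std_normal_density x)) \<circ> uminus)"
    by (rule distr_density_distr) auto
  ultimately show ?thesis by simp
qed

lemma reflect_measurable_gauss: "compose {..<n} uminus \<in> gauss n \<rightarrow>\<^sub>M gauss n"
  unfolding compose_def gauss_def by measurable

lemma reflect_reflect_gauss:
  "e \<in> space (gauss n) \<Longrightarrow> compose {..<n} uminus (compose {..<n} uminus e) = e"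
  by (auto simp: compose_def gauss_def space_PiM fun_eq_iff PiE_def extensional_def)

lemma distr_reflect_gauss: "distr (gauss n) (gauss n) (compose {..<n} uminus) = gauss n"
proof -
  have "distr (density lborel std_normal_density) (density lborel std_normal_density) uminus
      = density lborel std_normal_density"
    using distr_uminus_std_normal by (metis distr_cong sets_density)
  moreover have "distr (gauss n) (gauss n) (compose {..<n} uminus)
      = PiM {..<n} (\<lambda>_. distr (density lborel std_normal_density) (density lborel std_normal_density) uminus)"
    unfolding gauss_def
    by (rule distr_PiM_finite_prob_space') (auto intro: prob_space_normal_density)
  ultimately show ?thesis by (simp add: gauss_def)
qed

text \<open>No measurability of S is required: a measure-preserving involution also maps
  non-measurable sets to non-measurable sets, on which measure is 0.\<close>
lemma measure_vimage_involution:
  assumes T: "T \<in> M \<rightarrow>\<^sub>M M" and TT: "\<And>x. x \<in> space M \<Longrightarrow> T (T x) = x"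
    and distr: "distr M M T = M" and S: "S \<subseteq> space M"
  shows "measure M (T -` S \<inter> space M) = measure M S"
proof (cases "S \<in> sets M")
  case True
  then show ?thesis using measure_distr[OF T True] distr by simp
next
  case False
  have "T -` (T -` S \<inter> space M) \<inter> space M = S"
    using S TT measurable_space[OF T] by force
  then have "T -` S \<inter> space M \<notin> sets M"
    using False measurable_sets[OF T] by metis
  with False show ?thesis by (simp add: measure_notin_sets)
qed

definition sign_recovery_event ::
    "nat \<Rightarrow> nat \<Rightarrow> (nat \<Rightarrow> nat \<Rightarrow> real) \<Rightarrow> real \<Rightarrow> (nat \<Rightarrow> real) \<Rightarrow> (nat \<Rightarrow> real) set" where
  "sign_recovery_event n p X lam \<beta> = {e \<in> space (gauss n).
     (\<forall>j\<in>supp p \<beta>. uvec n p X lam \<beta> e j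
        < sqrt (real n) * sgn (\<beta> j) * sqrt (Vdiag n X j) * \<beta> j) \<and>
     (\<forall>j\<in>nsupp p \<beta>. \<bar>vvec n p X lam \<beta> e j\<bar> \<le> lam * sqrt (real n))}"

lemma phi_eq_measure_sign_recovery_event:
  "phi n p X lam \<beta> = measure (gauss n) (sign_recovery_event n p X lam \<beta>)"
  by (simp add: phi_def sign_recovery_event_def)

lemma sum_mult_reflect:
  fixes f e :: "nat \<Rightarrow> real"
  shows "(\<Sum>i<n. f i * compose {..<n} uminus e i) = - (\<Sum>i<n. f i * e i)"
  by (simp add: compose_def flip: sum_negf)

lemma resid_reflect:
  "i < n \<Longrightarrow> resid n X A (compose {..<n} uminus e) i = - resid n X A e i"
  unfolding resid_def
  by (simp add: sum_mult_reflect compose_def sum_negf sum_divide_distrib[symmetric])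

context
  fixes p :: nat and \<beta> \<beta>' :: "nat \<Rightarrow> real"
  assumes antipodal: "\<And>j. j < p \<Longrightarrow> \<beta>' j = - \<beta> j"
begin

lemma supp_antipodal: "supp p \<beta>' = supp p \<beta>"
  using antipodal by (auto simp: supp_def)

lemma nsupp_antipodal: "nsupp p \<beta>' = nsupp p \<beta>"
  using antipodal by (auto simp: nsupp_def)

lemma sum_sgn_antipodal:
  "(\<Sum>m\<in>supp p \<beta>. g m * sgn (\<beta>' m)) = - (\<Sum>m\<in>supp p \<beta>. g m * sgn (\<beta> m))"
  using antipodal by (simp add: supp_def sum_negf)

lemma uvec_antipodal:
  assumes "j \<in> supp p \<beta>"
  shows "uvec n p X lam \<beta>' e j = uvec n p X lam \<beta> (compose {..<n} uminus e) j"
proof -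
  have "sgn (\<beta>' j) = - sgn (\<beta> j)"
    using assms antipodal by (simp add: supp_def)
  then show ?thesis
    unfolding uvec_def Let_def supp_antipodal
    by (simp add: sum_sgn_antipodal sum_mult_reflect sum_negf)
qed

lemma vvec_antipodal:
  "vvec n p X lam \<beta>' e j = - vvec n p X lam \<beta> (compose {..<n} uminus e) j"
proof -
  have "(\<Sum>i<n. F i * resid n X A (compose {..<n} uminus e) i) = - (\<Sum>i<n. F i * resid n X A e i)"
    for F A by (simp add: resid_reflect sum_negf)
  then show ?thesis
    unfolding vvec_def Let_def supp_antipodal sum_sgn_antipodal
    by (simp add: sum_negf algebra_simps)
qed

lemma sign_recovery_event_antipodal:
  "sign_recovery_event n p X lam \<beta>'
     = compose {..<n} uminus -` sign_recovery_event n p X lam \<beta> \<inter> space (gauss n)"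
proof -
  have threshold: "c * sgn (\<beta>' j) * d * \<beta>' j = c * sgn (\<beta> j) * d * \<beta> j"
    if "j \<in> supp p \<beta>" for j c d
    using that antipodal by (simp add: supp_def)
  show ?thesis
    unfolding sign_recovery_event_def supp_antipodal nsupp_antipodal
    using measurable_space[OF reflect_measurable_gauss]
    by (auto simp: uvec_antipodal vvec_antipodal threshold simp del: mult_cancel_left)
qed

lemma phi_antipodal: "phi n p X lam \<beta>' = phi n p X lam \<beta>"
  unfolding phi_eq_measure_sign_recovery_event sign_recovery_event_antipodal
  by (rule measure_vimage_involution[OF reflect_measurable_gauss reflect_reflect_gauss
        distr_reflect_gauss]) (auto simp: sign_recovery_event_def)

end

lemma signflip_uminus: "j < p \<Longrightarrow> signflip p \<beta> (\<lambda>j. - z j) j = - signflip p \<beta> z j"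
  by (simp add: signflip_def supp_def)

lemma sum_involution_transversal:
  fixes f :: "'a \<Rightarrow> 'b :: comm_semiring_1"
  assumes "finite T" "T \<subseteq> S"
    and \<iota>_S: "\<And>z. z \<in> S \<Longrightarrow> \<iota> z \<in> S" and \<iota>_\<iota>: "\<And>z. \<iota> (\<iota> z) = z"
    and transversal: "\<And>z. z \<in> S \<Longrightarrow> (z \<in> T) \<noteq> (\<iota> z \<in> T)"
    and f_\<iota>: "\<And>z. z \<in> S \<Longrightarrow> f (\<iota> z) = f z"
  shows "sum f S = 2 * sum f T"
proof -
  have S_split: "S = T \<union> \<iota> ` T"
    using assms(2) \<iota>_S transversal by (auto simp: image_iff) (metis \<iota>_\<iota>)
  have "T \<inter> \<iota> ` T = {}"
    using assms(2) transversal by auto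
  then have "sum f S = sum f T + sum f (\<iota> ` T)"
    unfolding S_split using \<open>finite T\<close> by (simp add: sum.union_disjoint)
  also have "sum f (\<iota> ` T) = sum (f \<circ> \<iota>) T"
    by (rule sum.reindex) (metis inj_on_inverseI \<iota>_\<iota>)
  also have "\<dots> = sum f T"
    using assms(2) f_\<iota> by (auto intro: sum.cong)
  finally show ?thesis by (simp add: mult_2)
qed

theorem corollary1:
  fixes n p :: nat and X :: "nat \<Rightarrow> nat \<Rightarrow> real" and lam :: real and \<beta> :: "nat \<Rightarrow> real"
    and Zpm :: "(nat \<Rightarrow> real) set"
  assumes "design n p X"
    and "lam > 0"
    and "invertible_on (supp p \<beta>) (Cmat n X)"
    and "\<forall>j\<in>supp p \<beta>. Vdiag n X j > 0"
    and "Zpm \<subseteq> signvecs p \<beta>"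
    and "card Zpm = 2 ^ (card (supp p \<beta>) - 1)"
    and "\<forall>z\<in>signvecs p \<beta>. (z \<in> Zpm) \<noteq> ((\<lambda>j. - z j) \<in> Zpm)"
  shows "phi_pm n p X lam \<beta> =
           (1 / 2 ^ (card (supp p \<beta>) - 1)) * (\<Sum>z\<in>Zpm. phi n p X lam (signflip p \<beta> z))"
proof -
  let ?f = "\<lambda>z. phi n p X lam (signflip p \<beta> z)"
  have "supp p \<beta> \<noteq> {}"
  proof
    assume "supp p \<beta> = {}"
    then have "(\<lambda>_. 0) \<in> signvecs p \<beta>" by (simp add: signvecs_def)
    with assms(7) show False by auto
  qed
  then have "card (supp p \<beta>) \<noteq> 0"
    by (simp add: supp_def)
  then have card_supp: "(2::real) ^ card (supp p \<beta>) = 2 * 2 ^ (card (supp p \<beta>) - 1)"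
    by (metis power_eq_if)
  have "finite Zpm"
    using assms(6) card.infinite by fastforce
  then have "(\<Sum>z\<in>signvecs p \<beta>. ?f z) = 2 * (\<Sum>z\<in>Zpm. ?f z)"
    by (rule sum_involution_transversal[where \<iota> = "\<lambda>z j. - z j"])
      (use assms(5,7) in \<open>auto simp: signvecs_def phi_antipodal signflip_uminus\<close>)
  then show ?thesis
    by (simp add: phi_pm_def card_supp)
qed

end
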